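(* Consider the single-server control problem of minimizing $\limsup_{T\to\infty}\frac1T\sum_{t=0}^{T-1}\mathbb{E}[c(X_t,\nu_t)]$ with $c(x,\nu)=Cx+(1-\nu)\lambda$. There exists an optimal stable stationary policy $v^*:\mathcal N\to\{0,1\}$, and $W(x)=e^{ax}$ (with $a>0$ satisfying $p(e^a-1)<\frac{q}{2}(1-e^{-a})$) serves as a Lyapunov function for the corresponding optimally controlled Markov chain $\{X^*_t\}$, i.e. $\mathbb{E}[W(X^*_{t+1})-W(X^*_t)\mid X^*_t]\le -bW(X^*_t)$ for $X^*_t\neq 0$, for some $b>0$.
   Context: Single-server (decoupled) problem: Bernoulli($p$) arrivals $\xi_t$, $p\in(0,1)$; queue length $X_t\in\mathcal N=\{0,1,2,\dots\}$ with $X_{t+1}=X_t-D_{t+1}+\nu_t\xi_{t+1}$, $\nu_t\in\{0,1\}$ an admissible control (1 = active, arrivals admitted; 0 = passive), where given $X_t=x\ge1$, $D_{t+1}\sim\mathrm{Binomial}(x,q/x)$ and there are no departures when $x=0$. Parameters: holding cost $C>0$, capacity $q$ with $1>q>2p$, Lagrange multiplier (subsidy/tax for passivity) $\lambda\in\mathbb R$. Cost per stage $c(x,\nu)=Cx+(1-\nu)\lambda$. *)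

theory Defs
  imports "HOL-Probability.Probability"
begin

text \<open>State x :: nat, action a :: bool (True = active, 1; False = passive, 0).\<close>

definition departures :: "real \<Rightarrow> nat \<Rightarrow> nat pmf" where
  "departures q x = (if x = 0 then return_pmf 0 else binomial_pmf x (q / real x))"

definition queue_trans :: "real \<Rightarrow> real \<Rightarrow> nat \<Rightarrow> bool \<Rightarrow> nat pmf" where
  "queue_trans p q x a =
     bind_pmf (departures q x) (\<lambda>d. bind_pmf (bernoulli_pmf p) (\<lambda>e.
       return_pmf (x - d + (if a \<and> e then 1 else 0))))"

definition cost :: "real \<Rightarrow> real \<Rightarrow> nat \<Rightarrow> bool \<Rightarrow> real" where
  "cost C lam x a = C * real x + (if a then 0 else lam)"

text \<open>Admissible (general, history-dependent, possibly randomized) policies: the action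
  distribution at time t depends on the past state-action history and the current state.\<close>
type_synonym policy = "(nat \<times> bool) list \<Rightarrow> nat \<Rightarrow> bool pmf"

definition stationary :: "(nat \<Rightarrow> bool) \<Rightarrow> policy" where
  "stationary v = (\<lambda>h x. return_pmf (v x))"

fun path_dist :: "real \<Rightarrow> real \<Rightarrow> policy \<Rightarrow> nat \<Rightarrow> nat \<Rightarrow> ((nat \<times> bool) list \<times> nat) pmf" where
  "path_dist p q \<pi> x0 0 = return_pmf ([], x0)"
| "path_dist p q \<pi> x0 (Suc t) =
     bind_pmf (path_dist p q \<pi> x0 t) (\<lambda>(h, x).
       bind_pmf (\<pi> h x) (\<lambda>a. map_pmf (\<lambda>y. (h @ [(x, a)], y)) (queue_trans p q x a)))"

definition state_action :: "real \<Rightarrow> real \<Rightarrow> policy \<Rightarrow> nat \<Rightarrow> nat \<Rightarrow> (nat \<times> bool) pmf" where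
  "state_action p q \<pi> x0 t =
     bind_pmf (path_dist p q \<pi> x0 t) (\<lambda>(h, x). map_pmf (\<lambda>a. (x, a)) (\<pi> h x))"

text \<open>E[c(X_t, nu_t)] (all distributions here have finite support).\<close>
definition exp_cost :: "real \<Rightarrow> real \<Rightarrow> real \<Rightarrow> real \<Rightarrow> policy \<Rightarrow> nat \<Rightarrow> nat \<Rightarrow> real" where
  "exp_cost p q C lam \<pi> x0 t =
     measure_pmf.expectation (state_action p q \<pi> x0 t) (\<lambda>(x, a). cost C lam x a)"

definition avg_cost :: "real \<Rightarrow> real \<Rightarrow> real \<Rightarrow> real \<Rightarrow> policy \<Rightarrow> nat \<Rightarrow> ereal" where
  "avg_cost p q C lam \<pi> x0 =
     limsup (\<lambda>T. ereal ((\<Sum>t<T. exp_cost p q C lam \<pi> x0 t) / real T))"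

definition stable_policy :: "real \<Rightarrow> real \<Rightarrow> (nat \<Rightarrow> bool) \<Rightarrow> bool" where
  "stable_policy p q v \<longleftrightarrow> (\<forall>x0.
     limsup (\<lambda>T. ereal ((\<Sum>t<T. measure_pmf.expectation (path_dist p q (stationary v) x0 t)
                                  (\<lambda>(h, x). real x)) / real T)) < \<infinity>)"

end

theory Submission
  imports Defs "HOL-Library.Diagonal_Subsequence"
begin

text \<open>
  From a state \<open>x \<ge> 1\<close>, under either action, the next state \<open>Y\<close> satisfies
  \<open>E exp (\<alpha> Y) = exp (\<alpha> x) (1 - q / x (1 - exp (- \<alpha>)))^x (1 - p + p exp \<alpha>)
    \<le> exp (p (exp \<alpha> - 1) - q (1 - exp (- \<alpha>))) exp (\<alpha> x)\<close>
  by the binomial theorem, so \<open>exp (\<alpha> x)\<close> has geometric drift under every policy.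
  For \<open>\<alpha> = ln 2\<close> the rate is \<open>exp (p - q / 2) < 1\<close>, hence \<open>E 2^X\<^sub>t\<close> is bounded uniformly
  in \<open>t\<close> and in the policy, which gives stability.
  An optimal stationary policy comes from the vanishing discount method: the relative
  discounted values \<open>V\<^sub>\<beta> x - V\<^sub>\<beta> 0\<close> lie between \<open>- K 2^x\<close> and \<open>M 2^x\<close> for all \<open>\<beta> < 1\<close>,
  so along a diagonal subsequence \<open>\<beta> \<rightarrow> 1\<close> they converge to a solution \<open>(g, h)\<close> of the
  average cost optimality equation with \<open>|h| = O(2^x)\<close>. Telescoping this equation along
  any policy, the bounded remainder \<open>E h(X\<^sub>T)\<close> vanishes after division by \<open>T\<close>, so no policy
  beats \<open>g\<close> and a minimising selector attains it.
\<close>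

lemma expectation_bind_pmf_finite:
  fixes h :: "'b \<Rightarrow> real"
  assumes "finite (set_pmf M)" "\<And>x. x \<in> set_pmf M \<Longrightarrow> finite (set_pmf (N x))"
  shows "measure_pmf.expectation (bind_pmf M N) h =
         measure_pmf.expectation M (\<lambda>x. measure_pmf.expectation (N x) h)"
  by (subst pmf_expectation_bind[OF assms subset_refl], simp)
     (subst integral_measure_pmf[OF assms(1)], auto)

lemma expectation_bool_pmf:
  fixes f :: "bool \<Rightarrow> real"
  shows "measure_pmf.expectation M f = pmf M True * f True + pmf M False * f False"
  by (subst integral_measure_pmf_real[of UNIV]) (auto simp: UNIV_bool)

lemma finite_set_pmf_bool: "finite (set_pmf (M :: bool pmf))"
  by (rule finite_subset[of _ UNIV]) auto

lemma expectation_mono_finite_pmf: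
  fixes f g :: "'a \<Rightarrow> real"
  assumes "finite (set_pmf M)" "\<And>z. z \<in> set_pmf M \<Longrightarrow> f z \<le> g z"
  shows "measure_pmf.expectation M f \<le> measure_pmf.expectation M g"
  using assms by (intro integral_mono_AE) (auto intro!: integrable_measure_pmf_finite AE_pmfI)

lemma expectation_add_finite_pmf:
  fixes f g :: "'a \<Rightarrow> real"
  assumes "finite (set_pmf M)"
  shows "measure_pmf.expectation M (\<lambda>z. f z + g z) =
         measure_pmf.expectation M f + measure_pmf.expectation M g"
  using assms by (intro Bochner_Integration.integral_add) (auto intro!: integrable_measure_pmf_finite)

lemma bounded_sequences_convergent_diagonal:
  fixes F :: "nat \<Rightarrow> nat \<Rightarrow> real"
  assumes bounded: "\<And>n. \<exists>B. \<forall>k. \<bar>F k n\<bar> \<le> B"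
  shows "\<exists>r. strict_mono r \<and> (\<forall>n. convergent (\<lambda>k. F (r k) n))"
proof -
  interpret subseqs "\<lambda>n s. convergent (\<lambda>k. F (s k) n)"
  proof
    fix n and s :: "nat \<Rightarrow> nat"
    obtain f where f: "strict_mono f" "monoseq (\<lambda>k. F (s (f k)) n)"
      using seq_monosub[of "\<lambda>k. F (s k) n"] by blast
    obtain B where "\<forall>k. \<bar>F k n\<bar> \<le> B" using bounded by blast
    then have "Bseq (\<lambda>k. F (s (f k)) n)" by (intro BseqI') auto
    with f show "\<exists>r'. strict_mono r' \<and> convergent (\<lambda>k. F ((s \<circ> r') k) n)"
      using Bseq_monoseq_convergent by auto
  qed
  have "convergent (\<lambda>k. F (diagseq k) n)" for n
  proof -
    have "convergent (\<lambda>k. F ((diagseq \<circ> (+) (Suc n)) k) n)"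
    proof (rule diagseq_holds)
      fix r s n assume "strict_mono (r :: nat \<Rightarrow> nat)" "convergent (\<lambda>k. F (s k) n)"
      then show "convergent (\<lambda>k. F ((s \<circ> r) k) n)"
        using LIMSEQ_subseq_LIMSEQ by (fastforce simp: convergent_def o_def)
    qed
    then show ?thesis
      using convergent_ignore_initial_segment[of "\<lambda>k. F (diagseq k) n" "Suc n"]
      by (simp add: o_def add.commute)
  qed
  then show ?thesis using subseq_diagseq by blast
qed

lemma limsup_le_of_bound:
  fixes f :: "nat \<Rightarrow> real"
  assumes "\<And>T. 1 \<le> T \<Longrightarrow> f T \<le> c + D / real T"
  shows "limsup (\<lambda>T. ereal (f T)) \<le> ereal c"
proof -
  have "limsup (\<lambda>T. ereal (f T)) \<le> limsup (\<lambda>T. ereal (c + D / real T))"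
    using assms by (intro Limsup_mono) (auto simp: eventually_sequentially intro!: exI[of _ 1])
  also have "\<dots> = ereal c"
    by (intro lim_imp_Limsup) (auto simp: tendsto_ereal intro: tendsto_eq_intros)
  finally show ?thesis .
qed

lemma limsup_ge_of_bound:
  fixes f :: "nat \<Rightarrow> real"
  assumes "\<And>T. 1 \<le> T \<Longrightarrow> c - D / real T \<le> f T"
  shows "ereal c \<le> limsup (\<lambda>T. ereal (f T))"
proof -
  have "ereal c = limsup (\<lambda>T. ereal (c - D / real T))"
    by (intro lim_imp_Limsup[symmetric]) (auto simp: tendsto_ereal intro: tendsto_eq_intros)
  also have "\<dots> \<le> limsup (\<lambda>T. ereal (f T))"
    using assms by (intro Limsup_mono) (auto simp: eventually_sequentially intro!: exI[of _ 1])
  finally show ?thesis .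
qed

locale single_server_queue =
  fixes p q C lam :: real
  assumes p_pos: "0 < p" and p_less_1: "p < 1" and capacity: "2 * p < q" and q_less_1: "q < 1"
    and C_pos: "0 < C"
begin

lemma q_pos: "0 < q"
  using p_pos capacity by linarith

lemma set_departures: "set_pmf (departures q x) \<subseteq> {..x}"
proof (cases "x = 0")
  case False
  then have "0 < q / real x" "q / real x < 1"
    using q_pos q_less_1 by (auto simp: field_simps)
  with False show ?thesis by (simp add: departures_def)
qed (simp add: departures_def)

lemma set_queue_trans: "set_pmf (queue_trans p q x a) \<subseteq> {..Suc x}"
  using set_departures[of x] by (auto simp: queue_trans_def set_bind_pmf)

lemma finite_set_queue_trans: "finite (set_pmf (queue_trans p q x a))"
  using set_queue_trans finite_subset by blast

lemma queue_trans_0_passive: "queue_trans p q 0 False = return_pmf 0"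
  by (simp add: queue_trans_def departures_def bind_return_pmf bind_pmf_const)

definition trans_exp :: "nat \<Rightarrow> bool \<Rightarrow> (nat \<Rightarrow> real) \<Rightarrow> real" where
  "trans_exp x a f = measure_pmf.expectation (queue_trans p q x a) f"

lemma trans_exp_as_sum: "trans_exp x a f = (\<Sum>y\<le>Suc x. f y * pmf (queue_trans p q x a) y)"
  unfolding trans_exp_def by (rule integral_measure_pmf_real) (use set_queue_trans in auto)

lemma trans_exp_mono:
  "(\<And>y. y \<in> set_pmf (queue_trans p q x a) \<Longrightarrow> f y \<le> g y) \<Longrightarrow> trans_exp x a f \<le> trans_exp x a g"
  unfolding trans_exp_def by (rule expectation_mono_finite_pmf[OF finite_set_queue_trans])

lemma trans_exp_add: "trans_exp x a (\<lambda>y. f y + g y) = trans_exp x a f + trans_exp x a g"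
  unfolding trans_exp_def by (rule expectation_add_finite_pmf[OF finite_set_queue_trans])

lemma trans_exp_diff: "trans_exp x a (\<lambda>y. f y - g y) = trans_exp x a f - trans_exp x a g"
  unfolding trans_exp_def
  by (intro Bochner_Integration.integral_diff integrable_measure_pmf_finite finite_set_queue_trans)

lemma trans_exp_cmult: "trans_exp x a (\<lambda>y. c * f y) = c * trans_exp x a f"
  by (simp add: trans_exp_def)

lemma trans_exp_const: "trans_exp x a (\<lambda>y. c) = c"
  by (simp add: trans_exp_def)

lemma trans_exp_0_passive: "trans_exp 0 False f = f 0"
  by (simp add: trans_exp_def queue_trans_0_passive)

lemma trans_exp_tendsto:
  "(\<And>y. (\<lambda>n. f n y) \<longlonglongrightarrow> g y) \<Longrightarrow> (\<lambda>n. trans_exp x a (f n)) \<longlonglongrightarrow> trans_exp x a g"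
  unfolding trans_exp_as_sum by (intro tendsto_intros) auto

lemma trans_exp_exp:
  assumes x: "1 \<le> x"
  shows "trans_exp x a (\<lambda>y. exp (\<alpha> * real y)) =
     exp (\<alpha> * real x) * (1 - q / real x * (1 - exp (- \<alpha>))) ^ x * (if a then 1 - p + p * exp \<alpha> else 1)"
proof -
  define r where "r = q / real x"
  have r: "0 < r" "r < 1"
    using q_pos q_less_1 x by (auto simp: r_def field_simps)
  define A where "A = (if a then 1 - p + p * exp \<alpha> else 1)"
  have departures: "departures q x = binomial_pmf x r"
    using x by (simp add: departures_def r_def)
  have "trans_exp x a (\<lambda>y. exp (\<alpha> * real y)) = measure_pmf.expectation (departures q x)
      (\<lambda>d. p * exp (\<alpha> * real (x - d + (if a then 1 else 0))) + (1 - p) * exp (\<alpha> * real (x - d)))"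
    unfolding trans_exp_def queue_trans_def using p_pos p_less_1 set_departures[of x]
    by (simp add: expectation_bind_pmf_finite finite_subset[OF set_departures] set_bind_pmf
        finite_set_pmf_bool expectation_bool_pmf)
  also have "\<dots> = (\<Sum>d\<le>x. (p * exp (\<alpha> * real (x - d + (if a then 1 else 0))) +
      (1 - p) * exp (\<alpha> * real (x - d))) * pmf (departures q x) d)"
    by (rule integral_measure_pmf_real) (use set_departures in auto)
  also have "\<dots> = (\<Sum>d\<le>x. exp (\<alpha> * real x) * A * (of_nat (x choose d) * (r * exp (- \<alpha>)) ^ d * (1 - r) ^ (x - d)))"
  proof (rule sum.cong[OF refl])
    fix d assume "d \<in> {..x}"
    then have "exp (\<alpha> * real (x - d)) = exp (\<alpha> * real x) * exp (- \<alpha>) ^ d"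
      by (simp add: of_nat_diff algebra_simps flip: exp_of_nat_mult exp_add)
    then show "(p * exp (\<alpha> * real (x - d + (if a then 1 else 0))) + (1 - p) * exp (\<alpha> * real (x - d))) *
        pmf (departures q x) d
      = exp (\<alpha> * real x) * A * (of_nat (x choose d) * (r * exp (- \<alpha>)) ^ d * (1 - r) ^ (x - d))"
      unfolding departures pmf_binomial[OF less_imp_le[OF r(1)] less_imp_le[OF r(2)]] A_def
      by (cases a) (simp_all add: distrib_right exp_add power_mult_distrib algebra_simps)
  qed
  also have "\<dots> = exp (\<alpha> * real x) * A * (r * exp (- \<alpha>) + (1 - r)) ^ x"
    by (simp add: binomial_ring sum_distrib_left)
  finally show ?thesis
    by (simp add: A_def r_def algebra_simps)
qed

lemma trans_exp_exp_le:
  assumes \<alpha>: "0 < \<alpha>" and x: "1 \<le> x"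
  shows "trans_exp x a (\<lambda>y. exp (\<alpha> * real y)) \<le>
         exp (p * (exp \<alpha> - 1) - q * (1 - exp (- \<alpha>))) * exp (\<alpha> * real x)"
proof -
  define t where "t = q / real x * (1 - exp (- \<alpha>))"
  have "q * (1 - exp (- \<alpha>)) \<le> 1"
    using q_pos q_less_1 \<alpha> by (intro mult_le_one) auto
  then have t: "0 \<le> t" "t \<le> 1"
    using q_pos x \<alpha> by (auto simp: t_def field_simps)
  have "(1 - t) ^ x \<le> exp (- t) ^ x"
    using t exp_ge_add_one_self[of "- t"] by (intro power_mono) auto
  also have "\<dots> = exp (- (q * (1 - exp (- \<alpha>))))"
    using x by (simp add: t_def flip: exp_of_nat_mult)
  finally have departure_factor: "(1 - t) ^ x \<le> exp (- (q * (1 - exp (- \<alpha>))))" .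
  have arrival_factor: "(if a then 1 - p + p * exp \<alpha> else 1) \<le> exp (p * (exp \<alpha> - 1))"
    using exp_ge_add_one_self[of "p * (exp \<alpha> - 1)"] p_pos \<alpha> by (auto simp: algebra_simps)
  have "trans_exp x a (\<lambda>y. exp (\<alpha> * real y)) =
        exp (\<alpha> * real x) * (1 - t) ^ x * (if a then 1 - p + p * exp \<alpha> else 1)"
    using trans_exp_exp[OF x] by (simp add: t_def)
  also have "\<dots> \<le> exp (\<alpha> * real x) * exp (- (q * (1 - exp (- \<alpha>)))) * exp (p * (exp \<alpha> - 1))"
    using p_pos p_less_1 t
    by (intro mult_mono mult_left_mono departure_factor arrival_factor) auto
  finally show ?thesis
    by (simp add: algebra_simps flip: exp_add)
qed

lemma trans_exp_exp_drift_negative: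
  assumes "0 < \<alpha>" and "p * (exp \<alpha> - 1) < q * (1 - exp (- \<alpha>))"
  shows "\<exists>b>0. \<forall>x a. x \<noteq> 0 \<longrightarrow>
     trans_exp x a (\<lambda>y. exp (\<alpha> * real y) - exp (\<alpha> * real x)) \<le> - b * exp (\<alpha> * real x)"
proof (intro exI conjI allI impI)
  define w where "w = p * (exp \<alpha> - 1) - q * (1 - exp (- \<alpha>))"
  show "0 < 1 - exp w"
    using assms(2) by (simp add: w_def)
  fix x :: nat and a :: bool
  assume "x \<noteq> 0"
  then show "trans_exp x a (\<lambda>y. exp (\<alpha> * real y) - exp (\<alpha> * real x)) \<le> - (1 - exp w) * exp (\<alpha> * real x)"
    using trans_exp_exp_le[OF assms(1), of x a]
    by (simp add: trans_exp_diff trans_exp_const w_def algebra_simps)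
qed

definition W :: "nat \<Rightarrow> real" where "W y = 2 ^ y"

definition \<rho> :: real where "\<rho> = exp (p - q / 2)"

lemma \<rho>_pos: "0 < \<rho>" and \<rho>_less_1: "\<rho> < 1"
  using capacity by (auto simp: \<rho>_def)

lemma W_ge_1: "1 \<le> W y"
  by (simp add: W_def)

lemma W_ge_id: "real y \<le> W y"
proof -
  have "real y < real (2 ^ y)"
    using less_exp[of y] by linarith
  then show ?thesis by (simp add: W_def)
qed

lemma trans_exp_W_le:
  assumes "1 \<le> x" shows "trans_exp x a W \<le> \<rho> * W x"
proof -
  have W_exp: "W = (\<lambda>y. exp (ln 2 * real y))"
    by (simp add: W_def fun_eq_iff exp_of_nat_mult mult.commute)
  show ?thesis
    using trans_exp_exp_le[OF _ assms, of "ln 2" a] by (simp add: W_exp \<rho>_def exp_minus)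
qed

lemma trans_exp_W_0_le: "trans_exp 0 a W \<le> 2"
proof -
  have "trans_exp 0 a W \<le> trans_exp 0 a (\<lambda>y. 2)"
  proof (rule trans_exp_mono)
    fix y assume "y \<in> set_pmf (queue_trans p q 0 a)"
    then have "y \<le> 1" using set_queue_trans by fastforce
    then show "W y \<le> 2" using power_increasing[of y 1 "2 :: real"] by (simp add: W_def)
  qed
  then show ?thesis by (simp add: trans_exp_const)
qed

lemma trans_exp_W_le_affine: "trans_exp x a W \<le> \<rho> * W x + 2"
  using trans_exp_W_le[of x a] trans_exp_W_0_le[of a] \<rho>_pos W_ge_1[of x]
  by (cases "x = 0") (auto simp: W_def)

text \<open>Shifting the costs by \<open>max (- lam) 0\<close> makes them nonnegative, so that value iteration
  started from \<open>0\<close> is monotone.\<close>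

definition scost :: "nat \<Rightarrow> bool \<Rightarrow> real" where
  "scost x a = cost C lam x a + max (- lam) 0"

lemma scost_nonneg: "0 \<le> scost x a"
proof -
  have "0 \<le> C * real x"
    using C_pos by simp
  then show ?thesis
    by (simp add: scost_def cost_def max_def)
qed

lemma scost_passive: "scost x False = C * real x + max lam 0"
  by (simp add: scost_def cost_def)

definition bellman :: "real \<Rightarrow> (nat \<Rightarrow> real) \<Rightarrow> nat \<Rightarrow> real" where
  "bellman \<beta> f x = min (scost x True + \<beta> * trans_exp x True f) (scost x False + \<beta> * trans_exp x False f)"

lemma bellman_mono: "0 \<le> \<beta> \<Longrightarrow> (\<And>y. f y \<le> g y) \<Longrightarrow> bellman \<beta> f x \<le> bellman \<beta> g x"
  unfolding bellman_def by (intro min.mono add_left_mono mult_left_mono trans_exp_mono) auto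

lemma bellman_nonneg:
  assumes "0 \<le> \<beta>" "\<And>y. 0 \<le> f y"
  shows "0 \<le> bellman \<beta> f x"
proof -
  have "0 \<le> trans_exp x a f" for a
    using trans_exp_mono[of x a "\<lambda>_. 0" f] assms(2) by (simp add: trans_exp_const)
  then show ?thesis
    using assms(1) scost_nonneg by (simp add: bellman_def)
qed

lemma bellman_add_const: "bellman \<beta> (\<lambda>y. f y + c) x = bellman \<beta> f x + \<beta> * c"
  by (simp add: bellman_def trans_exp_add trans_exp_const algebra_simps min_add_distrib_right)

lemma bellman_tendsto:
  "(\<And>y. (\<lambda>n. f n y) \<longlonglongrightarrow> g y) \<Longrightarrow> \<beta> \<longlonglongrightarrow> b \<Longrightarrow> (\<lambda>n. bellman (\<beta> n) (f n) x) \<longlonglongrightarrow> bellman b g x"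
  unfolding bellman_def by (intro tendsto_intros trans_exp_tendsto) auto

lemma bellman_at_0_le: "0 \<le> \<beta> \<Longrightarrow> bellman \<beta> f 0 \<le> max lam 0 + \<beta> * f 0"
  by (simp add: bellman_def trans_exp_0_passive scost_passive)

definition K :: real where "K = max lam 0 / (1 - \<rho>)"

definition M :: real where "M = (C + max lam 0 + 2 * K) / (1 - \<rho>)"

lemma K_nonneg: "0 \<le> K"
  using \<rho>_less_1 by (simp add: K_def)

lemma M_nonneg: "0 \<le> M"
  using \<rho>_less_1 K_nonneg C_pos by (simp add: M_def)

lemma trans_exp_ge_of_W_bound:
  "(\<And>y. c - D * W y \<le> f y) \<Longrightarrow> c - D * trans_exp x a W \<le> trans_exp x a f"
  using trans_exp_mono[of x a "\<lambda>y. c - D * W y" f] by (simp add: trans_exp_diff trans_exp_const trans_exp_cmult)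

lemma trans_exp_le_of_W_bound:
  "(\<And>y. f y \<le> c + D * W y) \<Longrightarrow> trans_exp x a f \<le> c + D * trans_exp x a W"
  using trans_exp_mono[of x a f "\<lambda>y. c + D * W y"] by (simp add: trans_exp_add trans_exp_const trans_exp_cmult)

lemma bellman_ge:
  assumes \<beta>: "0 \<le> \<beta>" "\<beta> \<le> 1" and lower: "\<And>y. f 0 - K * W y \<le> f y"
    and drift: "\<And>a. trans_exp x a W \<le> w"
  shows "\<beta> * f 0 - K * w \<le> bellman \<beta> f x"
proof -
  have "\<beta> * f 0 - K * w \<le> scost x a + \<beta> * trans_exp x a f" for a
  proof -
    have "1 \<le> trans_exp x a W"
      using trans_exp_mono[of x a "\<lambda>_. 1" W] W_ge_1 by (simp add: trans_exp_const)
    then have "\<beta> * (K * trans_exp x a W) \<le> K * w"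
      using \<beta> K_nonneg drift[of a] by (metis dual_order.trans mult_left_le_one_le mult_left_mono
          mult_nonneg_nonneg zero_le_one)
    moreover have "\<beta> * (f 0 - K * trans_exp x a W) \<le> \<beta> * trans_exp x a f"
      using \<beta> trans_exp_ge_of_W_bound[OF lower] by (intro mult_left_mono) auto
    ultimately show ?thesis
      using scost_nonneg[of x a] by (simp add: algebra_simps)
  qed
  then show ?thesis
    unfolding bellman_def by simp
qed

lemma bellman_at_0_ge:
  assumes "0 \<le> \<beta>" "\<beta> \<le> 1" "\<And>y. f 0 - K * W y \<le> f y"
  shows "\<beta> * f 0 - 2 * K \<le> bellman \<beta> f 0"
  using bellman_ge[OF assms trans_exp_W_0_le] by (simp add: mult.commute)

lemma bellman_lower:
  assumes \<beta>: "0 \<le> \<beta>" "\<beta> \<le> 1" and lower: "\<And>y. f 0 - K * W y \<le> f y"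
  shows "bellman \<beta> f 0 - K * W x \<le> bellman \<beta> f x"
proof (cases "x = 0")
  case False
  have "max lam 0 \<le> K * (1 - \<rho>) * W x"
    using \<rho>_less_1 W_ge_1[of x] by (simp add: K_def mult_le_cancel_left1)
  then have "bellman \<beta> f 0 - K * W x \<le> \<beta> * f 0 - K * (\<rho> * W x)"
    using bellman_at_0_le[OF \<beta>(1), of f] by (simp add: algebra_simps)
  also have "\<dots> \<le> bellman \<beta> f x"
    using False by (intro bellman_ge[OF \<beta> lower] trans_exp_W_le) auto
  finally show ?thesis .
qed (use K_nonneg in \<open>simp add: W_def\<close>)

lemma bellman_upper:
  assumes \<beta>: "0 \<le> \<beta>" "\<beta> \<le> 1" and lower: "\<And>y. f 0 - K * W y \<le> f y"
    and upper: "\<And>y. f y \<le> f 0 + M * W y"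
  shows "bellman \<beta> f x \<le> bellman \<beta> f 0 + M * W x"
proof (cases "x = 0")
  case False
  have "trans_exp x False f \<le> f 0 + M * trans_exp x False W"
    by (rule trans_exp_le_of_W_bound) (rule upper)
  also have "\<dots> \<le> f 0 + M * \<rho> * W x"
    using trans_exp_W_le[of x False] M_nonneg False by (simp add: mult_left_mono mult.assoc)
  finally have "\<beta> * trans_exp x False f \<le> \<beta> * f 0 + \<beta> * (M * \<rho> * W x)"
    using \<beta>(1) by (simp add: mult_left_mono flip: distrib_left)
  moreover have "\<beta> * (M * \<rho> * W x) \<le> M * \<rho> * W x"
    using \<beta> M_nonneg \<rho>_pos W_ge_1[of x] by (intro mult_left_le_one_le) auto
  ultimately have "\<beta> * trans_exp x False f \<le> \<beta> * f 0 + M * \<rho> * W x"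
    by linarith
  then have "bellman \<beta> f x \<le> C * real x + max lam 0 + \<beta> * f 0 + M * \<rho> * W x"
    unfolding bellman_def scost_passive by linarith
  moreover have "\<beta> * f 0 - 2 * K \<le> bellman \<beta> f 0"
    by (rule bellman_at_0_ge[OF \<beta> lower])
  moreover have "C * real x + max lam 0 + 2 * K \<le> M * (1 - \<rho>) * W x"
  proof -
    have "C * real x \<le> C * W x"
      using C_pos W_ge_id by simp
    moreover have "max lam 0 + 2 * K \<le> (max lam 0 + 2 * K) * W x"
      using K_nonneg W_ge_1[of x] by (simp add: mult_le_cancel_left1)
    moreover have "M * (1 - \<rho>) = C + max lam 0 + 2 * K"
      using \<rho>_less_1 by (simp add: M_def)
    ultimately show ?thesis
      by (simp add: distrib_right)
  qed
  ultimately show ?thesis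
    by (simp add: algebra_simps)
qed (use M_nonneg in \<open>simp add: W_def\<close>)

definition value_iter :: "real \<Rightarrow> nat \<Rightarrow> nat \<Rightarrow> real" where
  "value_iter \<beta> n = (bellman \<beta> ^^ n) (\<lambda>_. 0)"

lemma value_iter_0 [simp]: "value_iter \<beta> 0 = (\<lambda>_. 0)"
  and value_iter_Suc [simp]: "value_iter \<beta> (Suc n) = bellman \<beta> (value_iter \<beta> n)"
  by (simp_all add: value_iter_def)

lemma value_iter_nonneg: "0 \<le> \<beta> \<Longrightarrow> 0 \<le> value_iter \<beta> n x"
  by (induction n arbitrary: x) (auto intro!: bellman_nonneg)

lemma incseq_value_iter: "0 \<le> \<beta> \<Longrightarrow> incseq (\<lambda>n. value_iter \<beta> n x)"
proof (rule incseq_SucI)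
  show "0 \<le> \<beta> \<Longrightarrow> value_iter \<beta> n x \<le> value_iter \<beta> (Suc n) x" for n
    by (induction n arbitrary: x) (auto intro!: bellman_mono bellman_nonneg value_iter_nonneg)
qed

lemma value_iter_at_0_le: "0 \<le> \<beta> \<Longrightarrow> \<beta> < 1 \<Longrightarrow> value_iter \<beta> n 0 \<le> max lam 0 / (1 - \<beta>)"
proof (induction n)
  case (Suc n)
  have "value_iter \<beta> (Suc n) 0 \<le> max lam 0 + \<beta> * value_iter \<beta> n 0"
    using Suc.prems by (simp add: bellman_at_0_le)
  also have "\<dots> \<le> max lam 0 + \<beta> * (max lam 0 / (1 - \<beta>))"
    using Suc by (intro add_left_mono mult_left_mono) auto
  also have "\<dots> = max lam 0 / (1 - \<beta>)"
    using Suc.prems by (simp add: field_simps)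
  finally show ?case .
qed simp

lemma value_iter_lower: "0 \<le> \<beta> \<Longrightarrow> \<beta> \<le> 1 \<Longrightarrow> value_iter \<beta> n 0 - K * W x \<le> value_iter \<beta> n x"
proof (induction n arbitrary: x)
  case 0
  show ?case using K_nonneg W_ge_1[of x] by simp
qed (auto intro!: bellman_lower)

lemma value_iter_upper: "0 \<le> \<beta> \<Longrightarrow> \<beta> \<le> 1 \<Longrightarrow> value_iter \<beta> n x \<le> value_iter \<beta> n 0 + M * W x"
proof (induction n arbitrary: x)
  case 0
  show ?case using M_nonneg W_ge_1[of x] by simp
qed (auto intro!: bellman_upper value_iter_lower)

definition disc_value :: "real \<Rightarrow> nat \<Rightarrow> real" where
  "disc_value \<beta> x = lim (\<lambda>n. value_iter \<beta> n x)"

lemma value_iter_LIMSEQ: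
  assumes "0 \<le> \<beta>" "\<beta> < 1"
  shows "(\<lambda>n. value_iter \<beta> n x) \<longlonglongrightarrow> disc_value \<beta> x"
proof -
  have "value_iter \<beta> n x \<le> max lam 0 / (1 - \<beta>) + M * W x" for n
    using value_iter_upper[of \<beta> n x] value_iter_at_0_le[of \<beta> n] assms by linarith
  then have "convergent (\<lambda>n. value_iter \<beta> n x)"
    using incseq_convergent[OF incseq_value_iter] assms unfolding convergent_def by blast
  then show ?thesis
    unfolding disc_value_def by (rule convergent_LIMSEQ_iff[THEN iffD1])
qed

lemma disc_value_fixpoint:
  assumes "0 \<le> \<beta>" "\<beta> < 1"
  shows "disc_value \<beta> x = bellman \<beta> (disc_value \<beta>) x"
proof (rule LIMSEQ_unique)
  show "(\<lambda>n. value_iter \<beta> (Suc n) x) \<longlonglongrightarrow> disc_value \<beta> x"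
    using value_iter_LIMSEQ[OF assms] by (rule LIMSEQ_Suc)
  show "(\<lambda>n. value_iter \<beta> (Suc n) x) \<longlonglongrightarrow> bellman \<beta> (disc_value \<beta>) x"
    unfolding value_iter_Suc by (rule bellman_tendsto) (auto intro: value_iter_LIMSEQ[OF assms])
qed

lemma disc_value_relative_bounds:
  assumes "0 \<le> \<beta>" "\<beta> < 1"
  shows "- K * W x \<le> disc_value \<beta> x - disc_value \<beta> 0"
    and "disc_value \<beta> x - disc_value \<beta> 0 \<le> M * W x"
proof -
  note limits = value_iter_LIMSEQ[OF assms]
  have "disc_value \<beta> 0 - K * W x \<le> disc_value \<beta> x"
    by (rule LIMSEQ_le[OF tendsto_diff[OF limits tendsto_const] limits]) (use assms value_iter_lower in auto)
  moreover have "disc_value \<beta> x \<le> disc_value \<beta> 0 + M * W x"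
    by (rule LIMSEQ_le[OF limits tendsto_add[OF limits tendsto_const]]) (use assms value_iter_upper in auto)
  ultimately show "- K * W x \<le> disc_value \<beta> x - disc_value \<beta> 0"
    and "disc_value \<beta> x - disc_value \<beta> 0 \<le> M * W x"
    by simp_all
qed

lemma disc_value_at_0_bounds:
  assumes "0 \<le> \<beta>" "\<beta> < 1"
  shows "0 \<le> disc_value \<beta> 0" and "disc_value \<beta> 0 \<le> max lam 0 / (1 - \<beta>)"
  using assms
  by (auto intro!: LIMSEQ_le_const[OF value_iter_LIMSEQ] LIMSEQ_le_const2[OF value_iter_LIMSEQ]
      value_iter_nonneg value_iter_at_0_le)

definition discount :: "nat \<Rightarrow> real" where "discount k = 1 - 1 / (real k + 2)"

lemma discount_nonneg: "0 \<le> discount k" and discount_less_1: "discount k < 1"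
  by (simp_all add: discount_def field_simps)

lemma discount_LIMSEQ: "discount \<longlonglongrightarrow> 1"
proof -
  have "(\<lambda>k. 1 / (real k + 2)) \<longlonglongrightarrow> 0"
    using LIMSEQ_ignore_initial_segment[OF lim_inverse_n', of 2] by (simp add: add.commute)
  then show ?thesis
    unfolding discount_def using tendsto_diff[OF tendsto_const] by fastforce
qed

definition rel_value :: "nat \<Rightarrow> nat \<Rightarrow> real" where
  "rel_value k x = disc_value (discount k) x - disc_value (discount k) 0"

definition avg_est :: "nat \<Rightarrow> real" where
  "avg_est k = (1 - discount k) * disc_value (discount k) 0"

lemma rel_value_equation: "rel_value k x + avg_est k = bellman (discount k) (rel_value k) x"
proof -
  have "disc_value (discount k) x =
        bellman (discount k) (\<lambda>y. rel_value k y + disc_value (discount k) 0) x"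
    by (subst disc_value_fixpoint[OF discount_nonneg discount_less_1]) (simp add: rel_value_def)
  then show ?thesis
    unfolding bellman_add_const by (simp add: rel_value_def[abs_def] avg_est_def algebra_simps)
qed

lemma abs_rel_value_le: "\<bar>rel_value k x\<bar> \<le> (K + M) * W x"
proof -
  have "0 \<le> K * W x" "0 \<le> M * W x"
    using K_nonneg M_nonneg W_ge_1[of x] by simp_all
  then show ?thesis
    using disc_value_relative_bounds[of "discount k" x] discount_nonneg[of k] discount_less_1[of k]
    by (simp add: rel_value_def abs_le_iff algebra_simps)
qed

lemma abs_avg_est_le: "\<bar>avg_est k\<bar> \<le> max lam 0"
proof -
  have "0 < 1 - discount k"
    using discount_less_1 by simp
  with disc_value_at_0_bounds[OF discount_nonneg discount_less_1, of k]
  have "0 \<le> avg_est k" "avg_est k \<le> max lam 0"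
    by (simp_all add: avg_est_def pos_le_divide_eq mult.commute)
  then show ?thesis
    by simp
qed

lemma shifted_average_optimality_equation:
  "\<exists>g h. (\<forall>x. h x + g = bellman 1 h x) \<and> (\<forall>x. \<bar>h x\<bar> \<le> (K + M) * W x)"
proof -
  define F where "F k = case_nat (avg_est k) (rel_value k)" for k
  have "\<exists>B. \<forall>k. \<bar>F k n\<bar> \<le> B" for n
    using abs_avg_est_le abs_rel_value_le by (cases n) (auto simp: F_def)
  then obtain r where r: "strict_mono r" "\<And>n. convergent (\<lambda>k. F (r k) n)"
    using bounded_sequences_convergent_diagonal by blast
  define g where "g = lim (\<lambda>k. avg_est (r k))"
  define h where "h x = lim (\<lambda>k. rel_value (r k) x)" for x
  have g: "(\<lambda>k. avg_est (r k)) \<longlonglongrightarrow> g"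
    using r(2)[of 0] by (simp add: g_def F_def convergent_LIMSEQ_iff)
  have h: "(\<lambda>k. rel_value (r k) x) \<longlonglongrightarrow> h x" for x
    using r(2)[of "Suc x"] by (simp add: h_def F_def convergent_LIMSEQ_iff)
  have "h x + g = bellman 1 h x" for x
  proof (rule LIMSEQ_unique)
    show "(\<lambda>k. rel_value (r k) x + avg_est (r k)) \<longlonglongrightarrow> h x + g"
      by (intro tendsto_add h g)
    show "(\<lambda>k. rel_value (r k) x + avg_est (r k)) \<longlonglongrightarrow> bellman 1 h x"
      unfolding rel_value_equation
      by (rule bellman_tendsto[OF h LIMSEQ_subseq_LIMSEQ[OF discount_LIMSEQ r(1), unfolded o_def]])
  qed
  moreover have "\<bar>h x\<bar> \<le> (K + M) * W x" for x
    by (rule LIMSEQ_le_const2[OF tendsto_rabs[OF h]]) (use abs_rel_value_le in auto)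
  ultimately show ?thesis
    by blast
qed

lemma average_optimality_equation:
  "\<exists>g h v. (\<forall>x a. h x + g \<le> cost C lam x a + trans_exp x a h)
         \<and> (\<forall>x. h x + g = cost C lam x (v x) + trans_exp x (v x) h)
         \<and> (\<forall>x. \<bar>h x\<bar> \<le> (K + M) * W x)"
proof -
  obtain g h where eq: "\<And>x. h x + g = bellman 1 h x" and bound: "\<And>x. \<bar>h x\<bar> \<le> (K + M) * W x"
    using shifted_average_optimality_equation by blast
  define v where "v x = (cost C lam x True + trans_exp x True h \<le> cost C lam x False + trans_exp x False h)" for x
  have "h x + (g - max (- lam) 0) \<le> cost C lam x a + trans_exp x a h" for x a
    using eq[of x] by (cases a) (auto simp: bellman_def scost_def)
  moreover have "h x + (g - max (- lam) 0) = cost C lam x (v x) + trans_exp x (v x) h" for x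
    using eq[of x] unfolding bellman_def scost_def v_def min_def
    by (cases "cost C lam x True + trans_exp x True h \<le> cost C lam x False + trans_exp x False h") auto
  ultimately show ?thesis
    using bound by blast
qed

lemma finite_set_path_dist: "finite (set_pmf (path_dist p q \<pi> x0 t))"
  by (induction t)
     (auto simp: set_bind_pmf split_beta intro!: finite_UN_I finite_set_pmf_bool finite_set_queue_trans)

definition state_exp :: "policy \<Rightarrow> nat \<Rightarrow> nat \<Rightarrow> (nat \<Rightarrow> real) \<Rightarrow> real" where
  "state_exp \<pi> x0 t u = measure_pmf.expectation (path_dist p q \<pi> x0 t) (\<lambda>z. u (snd z))"

lemma state_exp_0 [simp]: "state_exp \<pi> x0 0 u = u x0"
  by (simp add: state_exp_def)

lemma state_exp_Suc:
  "state_exp \<pi> x0 (Suc t) u = measure_pmf.expectation (path_dist p q \<pi> x0 t)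
     (\<lambda>z. measure_pmf.expectation (\<pi> (fst z) (snd z)) (\<lambda>a. trans_exp (snd z) a u))"
proof -
  have "measure_pmf.expectation (bind_pmf (\<pi> h x) (\<lambda>a. map_pmf (\<lambda>y. (h @ [(x, a)], y)) (queue_trans p q x a)))
          (\<lambda>z. u (snd z))
        = measure_pmf.expectation (\<pi> h x) (\<lambda>a. trans_exp x a u)" for h x
    by (subst expectation_bind_pmf_finite[OF finite_set_pmf_bool]) (auto simp: trans_exp_def finite_set_queue_trans)
  then show ?thesis
    unfolding state_exp_def path_dist.simps
    by (subst expectation_bind_pmf_finite[OF finite_set_path_dist])
       (auto simp: split_beta set_bind_pmf intro!: finite_set_pmf_bool finite_set_queue_trans)
qed

lemma exp_cost_eq:
  "exp_cost p q C lam \<pi> x0 t = measure_pmf.expectation (path_dist p q \<pi> x0 t)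
     (\<lambda>z. measure_pmf.expectation (\<pi> (fst z) (snd z)) (\<lambda>a. cost C lam (snd z) a))"
  unfolding exp_cost_def state_action_def
  by (subst expectation_bind_pmf_finite[OF finite_set_path_dist]) (auto simp: split_beta intro!: finite_set_pmf_bool)

lemma exp_cost_add_state_exp_Suc:
  "exp_cost p q C lam \<pi> x0 t + state_exp \<pi> x0 (Suc t) u = measure_pmf.expectation (path_dist p q \<pi> x0 t)
     (\<lambda>z. measure_pmf.expectation (\<pi> (fst z) (snd z)) (\<lambda>a. cost C lam (snd z) a + trans_exp (snd z) a u))"
  unfolding exp_cost_eq state_exp_Suc expectation_add_finite_pmf[OF finite_set_pmf_bool]
  by (rule expectation_add_finite_pmf[OF finite_set_path_dist, symmetric])

definition W_bound :: "nat \<Rightarrow> real" where "W_bound x0 = max (W x0) (2 / (1 - \<rho>))"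

lemma state_exp_W_le: "state_exp \<pi> x0 t W \<le> W_bound x0"
proof (induction t)
  case (Suc t)
  have "measure_pmf.expectation (\<pi> h x) (\<lambda>a. trans_exp x a W) \<le> \<rho> * W x + 2" for h x
    using expectation_mono_finite_pmf[OF finite_set_pmf_bool, of "\<pi> h x" "\<lambda>a. trans_exp x a W" "\<lambda>_. \<rho> * W x + 2"]
      trans_exp_W_le_affine by simp
  then have "state_exp \<pi> x0 (Suc t) W \<le> measure_pmf.expectation (path_dist p q \<pi> x0 t) (\<lambda>z. \<rho> * W (snd z) + 2)"
    unfolding state_exp_Suc by (intro expectation_mono_finite_pmf[OF finite_set_path_dist]) auto
  also have "\<dots> = \<rho> * state_exp \<pi> x0 t W + 2"
    by (simp add: state_exp_def expectation_add_finite_pmf[OF finite_set_path_dist])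
  also have "\<dots> \<le> \<rho> * W_bound x0 + 2"
    using Suc \<rho>_pos by simp
  also have "\<dots> \<le> W_bound x0"
  proof -
    have "2 / (1 - \<rho>) \<le> W_bound x0"
      by (simp add: W_bound_def)
    then have "2 \<le> (1 - \<rho>) * W_bound x0"
      using \<rho>_less_1 by (simp add: pos_divide_le_eq mult.commute)
    then show ?thesis
      by (simp add: algebra_simps)
  qed
  finally show ?case .
qed (simp add: W_bound_def)

lemma abs_state_exp_le:
  assumes "\<And>x. \<bar>u x\<bar> \<le> D * W x" "0 \<le> D"
  shows "\<bar>state_exp \<pi> x0 t u\<bar> \<le> D * W_bound x0"
proof -
  have "\<bar>state_exp \<pi> x0 t u\<bar> \<le> measure_pmf.expectation (path_dist p q \<pi> x0 t) (\<lambda>z. \<bar>u (snd z)\<bar>)"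
    unfolding state_exp_def by (rule integral_abs_bound)
  also have "\<dots> \<le> measure_pmf.expectation (path_dist p q \<pi> x0 t) (\<lambda>z. D * W (snd z))"
    using assms(1) by (intro expectation_mono_finite_pmf[OF finite_set_path_dist])
  also have "\<dots> = D * state_exp \<pi> x0 t W"
    by (simp add: state_exp_def)
  also have "\<dots> \<le> D * W_bound x0"
    using assms(2) state_exp_W_le by (intro mult_left_mono)
  finally show ?thesis .
qed

lemma sum_exp_cost_ge:
  assumes "\<And>x a. u x + g \<le> cost C lam x a + trans_exp x a u"
  shows "real T * g + u x0 - state_exp \<pi> x0 T u \<le> (\<Sum>t<T. exp_cost p q C lam \<pi> x0 t)"
proof (induction T)
  case (Suc T)
  have "g + u x \<le> measure_pmf.expectation (\<pi> h x) (\<lambda>a. cost C lam x a + trans_exp x a u)" for h x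
    using expectation_mono_finite_pmf[OF finite_set_pmf_bool, of "\<pi> h x" "\<lambda>_. g + u x"] assms
    by (simp add: add.commute)
  then have "g + state_exp \<pi> x0 T u \<le> exp_cost p q C lam \<pi> x0 T + state_exp \<pi> x0 (Suc T) u"
    unfolding exp_cost_add_state_exp_Suc
    using expectation_mono_finite_pmf[OF finite_set_path_dist, of \<pi> x0 T "\<lambda>z. g + u (snd z)"]
    by (simp add: state_exp_def expectation_add_finite_pmf[OF finite_set_path_dist])
  with Suc show ?case
    by (simp add: distrib_right)
qed simp

lemma sum_exp_cost_stationary:
  assumes "\<And>x. u x + g = cost C lam x (v x) + trans_exp x (v x) u"
  shows "(\<Sum>t<T. exp_cost p q C lam (stationary v) x0 t) = real T * g + u x0 - state_exp (stationary v) x0 T u"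
proof (induction T)
  case (Suc T)
  have "exp_cost p q C lam (stationary v) x0 T + state_exp (stationary v) x0 (Suc T) u
        = measure_pmf.expectation (path_dist p q (stationary v) x0 T) (\<lambda>z. u (snd z) + g)"
    unfolding exp_cost_add_state_exp_Suc by (simp add: stationary_def flip: assms)
  also have "\<dots> = state_exp (stationary v) x0 T u + g"
    by (simp add: state_exp_def expectation_add_finite_pmf[OF finite_set_path_dist])
  finally show ?case
    using Suc by (simp add: distrib_right)
qed simp

lemma average_cost_optimal_stationary:
  "\<exists>v. \<forall>\<pi> x0. avg_cost p q C lam (stationary v) x0 \<le> avg_cost p q C lam \<pi> x0"
proof -
  obtain g h v where ineq: "\<And>x a. h x + g \<le> cost C lam x a + trans_exp x a h"
    and eq: "\<And>x. h x + g = cost C lam x (v x) + trans_exp x (v x) h"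
    and bound: "\<And>x. \<bar>h x\<bar> \<le> (K + M) * W x"
    using average_optimality_equation by blast
  define D where "D x0 = \<bar>h x0\<bar> + (K + M) * W_bound x0" for x0
  have remainder: "\<bar>h x0 - state_exp \<pi> x0 T h\<bar> \<le> D x0" for \<pi> x0 T
    using abs_state_exp_le[OF bound, of \<pi> x0 T] K_nonneg M_nonneg by (simp add: D_def)
  have "avg_cost p q C lam (stationary v) x0 \<le> ereal g" for x0
    unfolding avg_cost_def
  proof (rule limsup_le_of_bound)
    fix T :: nat assume "1 \<le> T"
    have "(\<Sum>t<T. exp_cost p q C lam (stationary v) x0 t) \<le> real T * g + D x0"
      using remainder[of x0 "stationary v" T] by (simp add: sum_exp_cost_stationary[OF eq] abs_le_iff)
    with \<open>1 \<le> T\<close> show "(\<Sum>t<T. exp_cost p q C lam (stationary v) x0 t) / real T \<le> g + D x0 / real T"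
      by (simp add: field_simps)
  qed
  moreover have "ereal g \<le> avg_cost p q C lam \<pi> x0" for \<pi> x0
    unfolding avg_cost_def
  proof (rule limsup_ge_of_bound)
    fix T :: nat assume "1 \<le> T"
    have "real T * g - D x0 \<le> (\<Sum>t<T. exp_cost p q C lam \<pi> x0 t)"
      using sum_exp_cost_ge[OF ineq, of T x0 \<pi>] remainder[of x0 \<pi> T] by (simp add: abs_le_iff)
    moreover have "g - D x0 / real T = (real T * g - D x0) / real T"
      using \<open>1 \<le> T\<close> by (simp add: field_simps)
    ultimately show "g - D x0 / real T \<le> (\<Sum>t<T. exp_cost p q C lam \<pi> x0 t) / real T"
      by (simp add: divide_right_mono)
  qed
  ultimately show ?thesis
    using order.trans by blast
qed

lemma stable_policy: "stable_policy p q v"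
  unfolding stable_policy_def
proof
  fix x0
  have bound: "measure_pmf.expectation (path_dist p q (stationary v) x0 t) (\<lambda>(h, x). real x) \<le> W_bound x0" for t
    using expectation_mono_finite_pmf[OF finite_set_path_dist, of "stationary v" x0 t "\<lambda>z. real (snd z)" "\<lambda>z. W (snd z)"]
      W_ge_id state_exp_W_le[of "stationary v" x0 t]
    by (simp add: state_exp_def split_beta')
  have "(\<Sum>t<T. measure_pmf.expectation (path_dist p q (stationary v) x0 t) (\<lambda>(h, x). real x))
      \<le> real T * W_bound x0" for T
    using sum_mono[of "{..<T}", OF bound] by simp
  then have "limsup (\<lambda>T. ereal ((\<Sum>t<T. measure_pmf.expectation (path_dist p q (stationary v) x0 t)
      (\<lambda>(h, x). real x)) / real T)) \<le> ereal (W_bound x0)"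
    by (intro limsup_le_of_bound[where D = 0]) (simp add: divide_le_eq mult.commute)
  then show "limsup (\<lambda>T. ereal ((\<Sum>t<T. measure_pmf.expectation (path_dist p q (stationary v) x0 t)
      (\<lambda>(h, x). real x)) / real T)) < \<infinity>"
    by (rule order.strict_trans1) simp
qed

end

theorem lemma3:
  fixes p q C lam :: real
  assumes "0 < p" and "p < 1" and "2 * p < q" and "q < 1" and "0 < C"
  shows "\<exists>v :: nat \<Rightarrow> bool.
           (\<forall>\<pi> x0. avg_cost p q C lam (stationary v) x0 \<le> avg_cost p q C lam \<pi> x0)
         \<and> stable_policy p q v
         \<and> (\<forall>a::real. 0 < a \<and> p * (exp a - 1) < q / 2 * (1 - exp (- a)) \<longrightarrow>
              (\<exists>b>0. \<forall>x::nat. x \<noteq> 0 \<longrightarrow>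
                 measure_pmf.expectation (queue_trans p q x (v x)) (\<lambda>y. exp (a * real y) - exp (a * real x))
                   \<le> - b * exp (a * real x)))"
proof -
  interpret single_server_queue p q C lam
    using assms by unfold_locales
  obtain v where "\<forall>\<pi> x0. avg_cost p q C lam (stationary v) x0 \<le> avg_cost p q C lam \<pi> x0"
    using average_cost_optimal_stationary by blast
  moreover have "\<exists>b>0. \<forall>x. x \<noteq> 0 \<longrightarrow>
      measure_pmf.expectation (queue_trans p q x (v x)) (\<lambda>y. exp (a * real y) - exp (a * real x))
        \<le> - b * exp (a * real x)"
    if "0 < a" "p * (exp a - 1) < q / 2 * (1 - exp (- a))" for a
  proof -
    have "q / 2 * (1 - exp (- a)) \<le> q * (1 - exp (- a))"
      using q_pos \<open>0 < a\<close> by simp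
    then show ?thesis
      using trans_exp_exp_drift_negative[OF \<open>0 < a\<close>] that(2) by (auto simp: trans_exp_def)
  qed
  ultimately show ?thesis
    using stable_policy by blast
qed

end
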